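(* Under the Lyapunov condition with exponent $\delta>0$, set $s=2+\delta$ and for $n\in\mathbb{N}$, $j\in\{0,\ldots,n-1\}$ define \[ \widetilde{\xi}^{(n)}_j=\xi_j\mathbf{1}\{|\xi_j|\le n^{1/s}\}-\mathbb{E}\big[\xi_j\mathbf{1}\{|\xi_j|\le n^{1/s}\}\big],\qquad \widetilde{\lambda}^{(n)}_k=\sum_{j=0}^{n-1}\widetilde{\xi}^{(n)}_j\omega_n^{kj}\quad (1\le k\le n-1). \] Then \[ \mathbb{P}\Big(\lim_{n\to\infty}\max_{1\le k\le n-1}\big||\lambda^{(n)}_k|-|\widetilde{\lambda}^{(n)}_k|\big|=0\Big)=1. \]
   Context: Lyapunov condition: $(\xi_j)_{j\in\mathbb{N}_0}$ is a sequence of i.i.d. non-degenerate real random variables on a probability space $(\Omega,\mathcal{F},\mathbb{P})$ with $\mathbb{E}[\xi_0]=0$, $\mathbb{E}[\xi_0^2]=1$, and there is $\delta>0$ with $\mathbb{E}[|\xi_0|^{2+\delta}]<\infty$. With $\omega_n=\exp(2\pi\mathsf{i}/n)$, $\lambda^{(n)}_k=\sum_{j=0}^{n-1}\xi_j\omega_n^{kj}$. *)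

theory Defs
  imports "HOL-Probability.Probability"
begin

definition omega_n :: "nat \<Rightarrow> complex" where
  "omega_n n = cis (2 * pi / real n)"

definition dft_coeff :: "(nat \<Rightarrow> real) \<Rightarrow> nat \<Rightarrow> nat \<Rightarrow> complex" where
  "dft_coeff x n k = (\<Sum>j<n. complex_of_real (x j) * omega_n n ^ (k * j))"

definition trunc_centered ::
  "'a measure \<Rightarrow> (nat \<Rightarrow> 'a \<Rightarrow> real) \<Rightarrow> real \<Rightarrow> nat \<Rightarrow> nat \<Rightarrow> 'a \<Rightarrow> real" where
  "trunc_centered M \<xi> s n j \<omega> =
     (if \<bar>\<xi> j \<omega>\<bar> \<le> real n powr (1 / s) then \<xi> j \<omega> else 0)
     - (\<integral>\<omega>'. (if \<bar>\<xi> j \<omega>'\<bar> \<le> real n powr (1 / s) then \<xi> j \<omega>' else 0) \<partial>M)"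

definition max_dev ::
  "'a measure \<Rightarrow> (nat \<Rightarrow> 'a \<Rightarrow> real) \<Rightarrow> real \<Rightarrow> nat \<Rightarrow> 'a \<Rightarrow> real" where
  "max_dev M \<xi> s n \<omega> =
     (if n < 2 then 0 else
       Max ((\<lambda>k. \<bar>cmod (dft_coeff (\<lambda>j. \<xi> j \<omega>) n k)
                 - cmod (dft_coeff (\<lambda>j. trunc_centered M \<xi> s n j \<omega>) n k)\<bar>) ` {1..n-1}))"

end

theory Submission
  imports Defs "HOL-Real_Asymp.Real_Asymp"
begin

text \<open>
  Since \<open>\<xi>\<^sub>j\<close> is distributed like \<open>\<xi>\<^sub>0\<close>, the sum over \<open>j\<close> of
  \<open>P(\<bar>\<xi>\<^sub>j\<bar> > j powr (1/s)) = P(\<bar>\<xi>\<^sub>0\<bar> powr s > j)\<close> is at most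
  \<open>E \<bar>\<xi>\<^sub>0\<bar> powr s + 1\<close>, so by the first Borel--Cantelli lemma (which needs no
  independence) almost surely \<open>\<bar>\<xi>\<^sub>j\<bar> \<le> j powr (1/s)\<close> for all large \<open>j\<close>.
  Then for all large \<open>n\<close> no \<open>\<xi>\<^sub>j\<close> with \<open>j < n\<close> is cut off at level
  \<open>n powr (1/s)\<close>, so the truncated variables differ from the original ones only by the
  common centring constant, which is invisible to the coefficients \<open>\<lambda>\<^sub>k\<close> with
  \<open>0 < k < n\<close>: the two families of coefficients eventually coincide.
\<close>

lemma sum_omega_n_power_eq_0:
  assumes "0 < k" "k < n"
  shows "(\<Sum>j<n. omega_n n ^ (k * j)) = 0"
proof -
  have n: "real n > 0" using assms by simp
  have "omega_n n ^ k \<noteq> 1"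
  proof
    assume "omega_n n ^ k = 1"
    then have "cis (real k * (2 * pi / real n)) = 1"
      by (simp add: omega_n_def Complex.DeMoivre)
    then have "cos (real k * (2 * pi / real n)) = 1"
      by (metis complex.sel(1) cis.simps(1) one_complex.simps(1))
    then obtain m :: int where "real k * (2 * pi / real n) = real_of_int m * 2 * pi"
      using cos_one_2pi_int by blast
    then have "int k = m * int n"
      using n by (simp add: field_simps) (metis of_int_eq_iff of_int_mult of_int_of_nat_eq)
    then have "n dvd k"
      by (metis dvd_triv_right of_nat_dvd_iff)
    then show False using assms by (auto dest: dvd_imp_le)
  qed
  moreover have "(omega_n n ^ k) ^ n = 1"
  proof -
    have "omega_n n ^ n = 1" using n by (simp add: omega_n_def Complex.DeMoivre)
    then show ?thesis by (metis power_mult mult.commute power_one)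
  qed
  ultimately show ?thesis
    by (simp add: power_mult sum_gp_strict)
qed

lemma dft_coeff_cong:
  "(\<And>j. j < n \<Longrightarrow> x j = y j) \<Longrightarrow> dft_coeff x n k = dft_coeff y n k"
  unfolding dft_coeff_def by (intro sum.cong) auto

lemma dft_coeff_diff_const:
  assumes "0 < k" "k < n"
  shows "dft_coeff (\<lambda>j. x j - c) n k = dft_coeff x n k"
proof -
  have "dft_coeff (\<lambda>j. x j - c) n k
      = dft_coeff x n k - complex_of_real c * (\<Sum>j<n. omega_n n ^ (k * j))"
    unfolding dft_coeff_def by (simp add: algebra_simps sum_subtractf sum_distrib_left)
  then show ?thesis
    using sum_omega_n_power_eq_0[OF assms] by simp
qed

lemma sum_indicator_real_less_le:
  "0 \<le> (x::real) \<Longrightarrow> (\<Sum>j<N. if real j < x then 1 else 0) \<le> min (real N) (x + 1)"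
  by (induction N) (auto simp: min_def split: if_splits)

lemma (in finite_measure) summable_measure_less:
  assumes X: "integrable M X" and nonneg: "\<And>\<omega>. \<omega> \<in> space M \<Longrightarrow> 0 \<le> X \<omega>"
  shows "summable (\<lambda>j. measure M {\<omega>\<in>space M. real j < X \<omega>})"
proof (rule summableI_nonneg_bounded)
  fix N
  define B where "B j = {\<omega>\<in>space M. real j < X \<omega>}" for j :: nat
  have [measurable]: "X \<in> borel_measurable M" using X by blast
  have B[measurable]: "B j \<in> sets M" for j unfolding B_def by measurable
  have count: "(\<Sum>j<N. indicator (B j) \<omega>) \<le> X \<omega> + 1" if "\<omega> \<in> space M" for \<omega>
  proof -
    have "(\<Sum>j<N. indicator (B j) \<omega>) = (\<Sum>j<N. if real j < X \<omega> then 1 else 0 :: real)"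
      using that unfolding B_def by (intro sum.cong) (auto simp: indicator_def)
    also have "\<dots> \<le> X \<omega> + 1"
      using sum_indicator_real_less_le[OF nonneg[OF that]] by simp
    finally show ?thesis .
  qed
  have "(\<Sum>j<N. measure M (B j)) = (\<integral>\<omega>. (\<Sum>j<N. indicator (B j) \<omega>) \<partial>M)"
    by (subst Bochner_Integration.integral_sum)
       (auto simp: emeasure_finite less_top[symmetric] Int_absorb2 sets.sets_into_space)
  also have "\<dots> \<le> (\<integral>\<omega>. X \<omega> + 1 \<partial>M)"
  proof (rule integral_mono)
    show "integrable M (\<lambda>\<omega>. \<Sum>j<N. indicator (B j) \<omega> :: real)"
      by (intro Bochner_Integration.integrable_sum integrable_real_indicator B)
         (simp add: emeasure_finite less_top[symmetric])
  qed (use X count in auto)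
  finally show "(\<Sum>j<N. measure M (B j)) \<le> (\<integral>\<omega>. X \<omega> + 1 \<partial>M)" .
qed simp

lemma measure_vimage_eq_of_distr_eq:
  assumes "X \<in> M \<rightarrow>\<^sub>M N" "Y \<in> M \<rightarrow>\<^sub>M N" "distr M N X = distr M N Y" "A \<in> sets N"
  shows "measure M (X -` A \<inter> space M) = measure M (Y -` A \<inter> space M)"
  using assms by (metis measure_distr)

lemma integral_comp_eq_of_distr_eq:
  fixes f :: "'b \<Rightarrow> 'c::{banach, second_countable_topology}"
  assumes "X \<in> M \<rightarrow>\<^sub>M N" "Y \<in> M \<rightarrow>\<^sub>M N" "distr M N X = distr M N Y" "f \<in> borel_measurable N"
  shows "(\<integral>\<omega>. f (X \<omega>) \<partial>M) = (\<integral>\<omega>. f (Y \<omega>) \<partial>M)"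
  using assms by (metis integral_distr)

lemma (in finite_measure) AE_eventually_abs_le_powr:
  fixes \<xi> :: "nat \<Rightarrow> 'a \<Rightarrow> real"
  assumes rv: "\<And>j. \<xi> j \<in> borel_measurable M"
    and ident: "\<And>j. distr M borel (\<xi> j) = distr M borel (\<xi> 0)"
    and s: "0 < s" and moment: "integrable M (\<lambda>\<omega>. \<bar>\<xi> 0 \<omega>\<bar> powr s)"
  shows "AE \<omega> in M. eventually (\<lambda>j. \<bar>\<xi> j \<omega>\<bar> \<le> real j powr (1 / s)) sequentially"
proof -
  define A where "A j = {\<omega>\<in>space M. real j powr (1 / s) < \<bar>\<xi> j \<omega>\<bar>}" for j :: nat
  have [measurable]: "\<xi> j \<in> borel_measurable M" for j using rv .
  have A[measurable]: "A j \<in> sets M" for j unfolding A_def by measurable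
  have "measure M (A j) = measure M {\<omega>\<in>space M. real j < \<bar>\<xi> 0 \<omega>\<bar> powr s}" for j
  proof -
    have root_less_iff: "real j powr (1 / s) < t \<longleftrightarrow> real j < t powr s" if "0 \<le> t" for t
      using that s powr_less_mono2[of s "real j powr (1 / s)" t]
        powr_less_mono2[of "1 / s" "real j" "t powr s"] by (auto simp: powr_powr)
    define S where "S = {x. real j powr (1 / s) < \<bar>x\<bar>}"
    have "A j = \<xi> j -` S \<inter> space M" by (auto simp: A_def S_def)
    moreover have "S \<in> sets borel" unfolding S_def by measurable
    ultimately have "measure M (A j) = measure M (\<xi> 0 -` S \<inter> space M)"
      using ident[of j] rv by (simp add: measure_vimage_eq_of_distr_eq[where N = borel])
    also have "\<dots> = measure M {\<omega>\<in>space M. real j < \<bar>\<xi> 0 \<omega>\<bar> powr s}"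
      by (auto simp: S_def root_less_iff intro!: arg_cong[where f = "measure M"])
    finally show ?thesis .
  qed
  then have "summable (\<lambda>j. measure M (A j))"
    using summable_measure_less[OF moment] by simp
  then have "AE \<omega> in M. eventually (\<lambda>j. \<omega> \<in> space M - A j) sequentially"
    by (intro borel_cantelli_AE1) (auto simp: emeasure_finite less_top[symmetric])
  then show ?thesis
    by eventually_elim (auto simp: A_def not_less elim: eventually_mono)
qed

lemma eventually_all_less_abs_le:
  fixes x f :: "nat \<Rightarrow> real"
  assumes "eventually (\<lambda>j. \<bar>x j\<bar> \<le> f j) sequentially" "mono f" "filterlim f at_top sequentially"
  shows "eventually (\<lambda>n. \<forall>j<n. \<bar>x j\<bar> \<le> f n) sequentially"
proof -
  obtain J where J: "\<And>j. J \<le> j \<Longrightarrow> \<bar>x j\<bar> \<le> f j"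
    using assms(1) by (auto simp: eventually_sequentially)
  define b where "b = (\<Sum>j<J. \<bar>x j\<bar>)"
  have b: "\<bar>x j\<bar> \<le> b" if "j < J" for j
    unfolding b_def using that by (intro member_le_sum) auto
  have "eventually (\<lambda>n. b \<le> f n) sequentially"
    using assms(3) by (simp add: filterlim_at_top)
  then show ?thesis
  proof eventually_elim
    case (elim n)
    show ?case
    proof (intro allI impI)
      fix j assume "j < n"
      show "\<bar>x j\<bar> \<le> f n"
      proof (cases "J \<le> j")
        case True
        then show ?thesis using J monoD[OF assms(2), of j n] \<open>j < n\<close> by force
      next
        case False
        then show ?thesis using b[of j] elim by linarith
      qed
    qed
  qed
qed

lemma max_dev_eq_0_if_not_truncated:
  assumes small: "\<And>j. j < n \<Longrightarrow> \<bar>\<xi> j \<omega>\<bar> \<le> real n powr (1 / s)"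
    and same_mean: "\<And>j. j < n \<Longrightarrow>
      (\<integral>\<omega>'. (if \<bar>\<xi> j \<omega>'\<bar> \<le> real n powr (1 / s) then \<xi> j \<omega>' else 0) \<partial>M) =
      (\<integral>\<omega>'. (if \<bar>\<xi> 0 \<omega>'\<bar> \<le> real n powr (1 / s) then \<xi> 0 \<omega>' else 0) \<partial>M)"
  shows "max_dev M \<xi> s n \<omega> = 0"
proof (cases "n < 2")
  case False
  define c where "c = (\<integral>\<omega>'. (if \<bar>\<xi> 0 \<omega>'\<bar> \<le> real n powr (1 / s) then \<xi> 0 \<omega>' else 0) \<partial>M)"
  have truncated_eq: "trunc_centered M \<xi> s n j \<omega> = \<xi> j \<omega> - c" if "j < n" for j
    using small[OF that] same_mean[OF that] by (simp add: trunc_centered_def c_def)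
  have "dft_coeff (\<lambda>j. trunc_centered M \<xi> s n j \<omega>) n k = dft_coeff (\<lambda>j. \<xi> j \<omega>) n k"
    if "k \<in> {1..n-1}" for k
  proof -
    have "dft_coeff (\<lambda>j. trunc_centered M \<xi> s n j \<omega>) n k = dft_coeff (\<lambda>j. \<xi> j \<omega> - c) n k"
      by (intro dft_coeff_cong truncated_eq)
    also have "\<dots> = dft_coeff (\<lambda>j. \<xi> j \<omega>) n k"
      using that by (intro dft_coeff_diff_const) auto
    finally show ?thesis .
  qed
  then have "(\<lambda>k. \<bar>cmod (dft_coeff (\<lambda>j. \<xi> j \<omega>) n k)
      - cmod (dft_coeff (\<lambda>j. trunc_centered M \<xi> s n j \<omega>) n k)\<bar>) ` {1..n-1} = {0}"
    using False by (auto simp: image_iff) (rule exI[of _ 1]; simp)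
  then show ?thesis
    using False unfolding max_dev_def by simp
qed (simp add: max_dev_def)

theorem lemma2p2:
  fixes M :: "'a measure" and \<xi> :: "nat \<Rightarrow> 'a \<Rightarrow> real" and \<delta> :: real
  assumes "prob_space M"
    and rv: "\<And>j. \<xi> j \<in> borel_measurable M"
    and indep: "prob_space.indep_vars M (\<lambda>_. borel) \<xi> UNIV"
    and ident: "\<And>j. distr M borel (\<xi> j) = distr M borel (\<xi> 0)"
    and nondeg: "\<not> (\<exists>c. AE \<omega> in M. \<xi> 0 \<omega> = c)"
    and mean: "integrable M (\<xi> 0)" "(\<integral>\<omega>. \<xi> 0 \<omega> \<partial>M) = 0"
    and var: "integrable M (\<lambda>\<omega>. (\<xi> 0 \<omega>)\<^sup>2)" "(\<integral>\<omega>. (\<xi> 0 \<omega>)\<^sup>2 \<partial>M) = 1"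
    and delta: "\<delta> > 0"
    and lyap: "integrable M (\<lambda>\<omega>. \<bar>\<xi> 0 \<omega>\<bar> powr (2 + \<delta>))"
  shows "AE \<omega> in M. (\<lambda>n. max_dev M \<xi> (2 + \<delta>) n \<omega>) \<longlonglongrightarrow> 0"
proof -
  interpret prob_space M by fact
  define s where "s = 2 + \<delta>"
  have s: "0 < s" using delta by (simp add: s_def)
  have same_mean: "(\<integral>\<omega>. (if \<bar>\<xi> j \<omega>\<bar> \<le> t then \<xi> j \<omega> else 0) \<partial>M) =
      (\<integral>\<omega>. (if \<bar>\<xi> 0 \<omega>\<bar> \<le> t then \<xi> 0 \<omega> else 0) \<partial>M)" for j t
    using rv ident[of j] by (intro integral_comp_eq_of_distr_eq[where N = borel]) auto
  have bound: "mono (\<lambda>n. real n powr (1 / s))" "filterlim (\<lambda>n. real n powr (1 / s)) at_top sequentially"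
    using s by (auto intro!: monoI powr_mono2) real_asymp
  have "AE \<omega> in M. eventually (\<lambda>j. \<bar>\<xi> j \<omega>\<bar> \<le> real j powr (1 / s)) sequentially"
    by (intro AE_eventually_abs_le_powr rv ident s) (simp add: s_def lyap)
  then show ?thesis
  proof eventually_elim
    case (elim \<omega>)
    from eventually_all_less_abs_le[OF elim bound]
    have "eventually (\<lambda>n. max_dev M \<xi> s n \<omega> = 0) sequentially"
      by eventually_elim (auto intro!: max_dev_eq_0_if_not_truncated same_mean)
    then show ?case
      unfolding s_def[symmetric] by (rule tendsto_eventually)
  qed
qed

end
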